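(* Let $N\ge1$, $0<\lambda\le\Lambda$, and assume $\beta=\frac{\Lambda}{\lambda}(N-1)+1>2$. Let $u:\mathbb{R}^N\to[0,\infty)$ be a nonnegative lower semicontinuous function and set $m(R)=\min_{|x|\le R}u(x)$ for $R\ge0$. (i) If $\mathcal{M}^+_{\lambda,\Lambda}(D^2u)\ge0$ in $\mathbb{R}^N$ in the viscosity sense, then $R\mapsto m(R)R^{\beta-2}$ is nondecreasing on $(0,\infty)$. (ii) Let $1<\gamma\le\frac{\beta}{\beta-1}$. If $\mathcal{M}^+_{\lambda,\Lambda}(D^2u)\ge|Du|^\gamma$ in $\mathbb{R}^N$ in the viscosity sense and $m(R)\to0$ as $R\to\infty$, then for every $\nu\in(0,\beta-2)$ there exists $R_\nu>0$ such that $R\mapsto m(R)R^{\nu}$ is nondecreasing on $[R_\nu,\infty)$.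
   Context: For $M\in\mathrm{Sym}_N$ with eigenvalues $e_1,\dots,e_N$, $\mathcal{M}^+_{\lambda,\Lambda}(M)=\sup_{\lambda I_N\le A\le\Lambda I_N}(-\mathrm{Tr}(AM))=-\lambda\sum_{e_k>0}e_k-\Lambda\sum_{e_k<0}e_k$. A viscosity solution of an inequality $G(x,u,Du,D^2u)\ge 0$ in an open set $\Omega$ is a lower semicontinuous $u$ such that for every $x_0\in\Omega$ and every $\varphi\in C^2$ for which $u-\varphi$ has a local minimum at $x_0$, $G(x_0,u(x_0),D\varphi(x_0),D^2\varphi(x_0))\ge0$. *)

theory Defs
  imports "HOL-Analysis.Analysis"
begin

definition pucci_admissible :: "real \<Rightarrow> real \<Rightarrow> real^'n^'n \<Rightarrow> bool" where
  "pucci_admissible l L A \<longleftrightarrow> transpose A = A \<and>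
     (\<forall>x::real^'n. l * (x \<bullet> x) \<le> x \<bullet> (A *v x) \<and> x \<bullet> (A *v x) \<le> L * (x \<bullet> x))"

definition pucci_max :: "real \<Rightarrow> real \<Rightarrow> real^'n^'n \<Rightarrow> real" where
  "pucci_max l L M = (SUP A \<in> {A. pucci_admissible l L A}. - trace (A ** M))"

definition lsc :: "('a::topological_space \<Rightarrow> real) \<Rightarrow> bool" where
  "lsc u \<longleftrightarrow> (\<forall>a. open {x. a < u x})"

definition C2_with :: "(real^'n \<Rightarrow> real) \<Rightarrow> (real^'n \<Rightarrow> real^'n) \<Rightarrow> (real^'n \<Rightarrow> real^'n^'n) \<Rightarrow> bool" where
  "C2_with phi Dphi Hphi \<longleftrightarrow>
     (\<forall>x. (phi has_derivative (\<lambda>h. Dphi x \<bullet> h)) (at x)) \<and>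
     (\<forall>x. (Dphi has_derivative (\<lambda>h. Hphi x *v h)) (at x)) \<and>
     continuous_on UNIV Hphi"

definition visc_super :: "(real^'n \<Rightarrow> real \<Rightarrow> real^'n \<Rightarrow> real^'n^'n \<Rightarrow> real) \<Rightarrow> (real^'n \<Rightarrow> real) \<Rightarrow> bool" where
  "visc_super G u \<longleftrightarrow> lsc u \<and>
     (\<forall>x0 phi Dphi Hphi. C2_with phi Dphi Hphi \<and>
        (\<forall>\<^sub>F x in at x0. u x - phi x \<ge> u x0 - phi x0) \<longrightarrow>
        G x0 (u x0) (Dphi x0) (Hphi x0) \<ge> 0)"

definition ball_min :: "(real^'n \<Rightarrow> real) \<Rightarrow> real \<Rightarrow> real" where
  "ball_min u R = Inf (u ` cball 0 R)"

end

theory Submission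
  imports Defs
begin

text \<open>
  The barrier \<open>w(x) = a ((|x|\<^sup>2 + \<epsilon>)\<^bsup>-\<nu>/2\<^esup> - C)\<close>, \<open>a > 0\<close>,
  has Hessian \<open>\<alpha> I + \<delta> x x\<^sup>T\<close> with \<open>\<alpha> \<le> 0 \<le> \<alpha> + \<delta> |x|\<^sup>2\<close> away from a small ball, which gives
  \<open>M\<^sup>+(D\<^sup>2w) \<le> a \<nu> \<lambda> (|x|\<^sup>2 + \<epsilon>)\<^bsup>-\<nu>/2-2\<^esup> (|x|\<^sup>2 (\<beta> - 2 - \<nu>) + \<epsilon> \<beta>)\<close>.  If \<open>w\<close> is a strict
  classical subsolution on the annulus \<open>R\<^sub>1 < |x| < R\<^sub>3\<close> and lies below \<open>u\<close> on its boundary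
  (\<open>w = m(R\<^sub>1)\<close> on the inner and \<open>w = 0\<close> on the outer sphere), the lower semicontinuous
  supersolution \<open>u\<close> cannot touch \<open>w\<close> from above, so \<open>u \<ge> w\<close> and hence \<open>m(R\<^sub>2) \<ge> w|\<^bsub>|x| = R\<^sub>2\<^esub>\<close>.
  Letting \<open>\<epsilon> \<rightarrow> 0\<close> and \<open>R\<^sub>3 \<rightarrow> \<infinity>\<close> gives \<open>m(R\<^sub>1) R\<^sub>1\<^sup>\<nu> \<le> m(R\<^sub>2) R\<^sub>2\<^sup>\<nu>\<close>.

  For (i), every \<open>\<nu> > \<beta> - 2\<close> makes \<open>w\<close> strict for small \<open>\<epsilon>\<close>, and \<open>\<nu> \<rightarrow> \<beta> - 2\<close> concludes.
  For (ii), \<open>\<nu> < \<beta> - 2\<close> leaves a positive Pucci bound, which is beaten by \<open>|Dw|\<^sup>\<gamma>\<close> as soon as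
  \<open>\<lambda> (\<beta> - 2 - \<nu>) < (\<nu> m(R\<^sub>1))\<^bsup>\<gamma>-1\<^esup> R\<^sub>1\<^bsup>2-\<gamma>\<^esup>\<close>.  Applying this once with \<open>R\<^sub>1 = 1\<close> and some \<open>\<nu>'\<close> close
  to \<open>\<beta> - 2\<close> yields \<open>m(R) \<ge> m(1) R\<^bsup>-\<nu>'\<^esup>\<close>; since \<open>\<gamma> \<le> \<beta>/(\<beta> - 1)\<close>, this makes the right-hand side
  grow like a positive power of \<open>R\<^sub>1\<close>, so the condition holds for all large \<open>R\<^sub>1\<close>.
\<close>

lemma power2_powr_half:
  assumes "0 \<le> (r::real)" shows "(r\<^sup>2) powr (a/2) = r powr a"
proof -
  have "(r\<^sup>2) powr (a/2) = (r powr 2) powr (a/2)" using assms by simp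
  also have "\<dots> = r powr a" by (simp add: powr_powr)
  finally show ?thesis .
qed

lemma filterlim_powr_at_top: "0 < (p::real) \<Longrightarrow> filterlim (\<lambda>x. x powr p) at_top at_top"
proof -
  assume p: "0 < p"
  have lim: "filterlim (\<lambda>x::real. inverse (x powr (-p))) at_top at_top"
    using p by (intro filterlim_inverse_at_top tendsto_neg_powr filterlim_ident)
       (auto intro: eventually_mono[OF eventually_gt_at_top[of 0]])
  have "\<forall>\<^sub>F x in at_top. inverse (x powr (-p)) = x powr p"
    using eventually_gt_at_top[of 0] by eventually_elim (simp add: powr_minus)
  from filterlim_cong[OF refl refl this] lim show ?thesis by simp
qed

lemma inner_mat_vec_eq_sum:
  "(x::real^'n) \<bullet> (A *v x) = (\<Sum>i\<in>UNIV. \<Sum>j\<in>UNIV. x$i * A$i$j * x$j)"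
  by (simp add: inner_vec_def matrix_vector_mult_def sum_distrib_left mult.assoc)

lemma projection_quadratic_form_sum:
  fixes A :: "real^'n^'n" and x :: "real^'n"
  defines "s \<equiv> x \<bullet> x"
  defines "v \<equiv> \<lambda>i. s *\<^sub>R axis i 1 - x$i *\<^sub>R x"
  shows "(\<Sum>i\<in>UNIV. v i \<bullet> (A *v v i)) = s * (s * trace A - x \<bullet> (A *v x))"
proof -
  have s: "s = (\<Sum>k\<in>UNIV. x$k * x$k)" by (simp add: s_def inner_vec_def)
  have vc: "\<And>i j. v i $ j = s * (if j = i then 1 else 0) - x$i * x$j"
    by (simp add: v_def axis_def)
  have d: "\<And>P (c::real). (if P then 1 else 0) * c = (if P then c else 0)"
       "\<And>P (c::real). c * (if P then 1 else 0) = (if P then c else 0)" by simp_all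
  have "(\<Sum>i\<in>UNIV. v i \<bullet> (A *v v i)) =
     (\<Sum>i\<in>UNIV. \<Sum>j\<in>UNIV. \<Sum>k\<in>UNIV. (s * (if j = i then 1 else 0) - x$i * x$j) * A$j$k * (s * (if k = i then 1 else 0) - x$i * x$k))"
    by (simp add: inner_mat_vec_eq_sum vc)
  also have "\<dots> = (\<Sum>i\<in>UNIV. \<Sum>j\<in>UNIV. \<Sum>k\<in>UNIV.
        s * s * ((if j = i then 1 else 0) * A$j$k * (if k = i then 1 else 0))
      - s * (x$i * ((if j = i then 1 else 0) * A$j$k * x$k))
      - s * (x$i * (x$j * A$j$k * (if k = i then 1 else 0)))
      + x$i * x$i * (x$j * A$j$k * x$k))"
    by (intro sum.cong refl) (simp add: algebra_simps)
  also have "\<dots> = s * s * trace A - s * (x \<bullet> (A *v x)) - s * (x \<bullet> (A *v x)) + s * (x \<bullet> (A *v x))"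
  proof -
    have diag: "(\<Sum>i\<in>UNIV. \<Sum>j\<in>UNIV. \<Sum>k\<in>UNIV. (if j = i then 1 else 0) * A$j$k * (if k = i then 1 else (0::real))) = trace A"
      by (simp add: trace_def d)
    have row: "(\<Sum>i\<in>UNIV. \<Sum>j\<in>UNIV. \<Sum>k\<in>UNIV. x$i * ((if j = i then 1 else 0) * A$j$k * x$k)) = x \<bullet> (A *v x)"
    proof -
      have "\<And>i. (\<Sum>j\<in>UNIV. \<Sum>k\<in>UNIV. x$i * ((if j = i then 1 else 0) * A$j$k * x$k))
          = (\<Sum>j\<in>UNIV. if j = i then (\<Sum>k\<in>UNIV. x$i * (A$j$k * x$k)) else 0)"
        by (intro sum.cong refl) auto
      then show ?thesis by (simp add: inner_mat_vec_eq_sum mult.assoc)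
    qed
    have column: "(\<Sum>i\<in>UNIV. \<Sum>j\<in>UNIV. \<Sum>k\<in>UNIV. x$i * (x$j * A$j$k * (if k = i then 1 else 0))) = x \<bullet> (A *v x)"
    proof -
      have "(\<Sum>i\<in>UNIV. \<Sum>j\<in>UNIV. \<Sum>k\<in>UNIV. x$i * (x$j * A$j$k * (if k = i then 1 else 0)))
         = (\<Sum>i\<in>UNIV. \<Sum>j\<in>UNIV. x$i * (x$j * A$j$i))"
        by (simp add: if_distrib cong: if_cong)
      also have "\<dots> = (\<Sum>j\<in>UNIV. \<Sum>i\<in>UNIV. x$j * A$j$i * x$i)"
        by (subst sum.swap) (simp add: algebra_simps)
      finally show ?thesis by (simp add: inner_mat_vec_eq_sum)
    qed
    have full: "(\<Sum>i\<in>UNIV. \<Sum>j\<in>UNIV. \<Sum>k\<in>UNIV. x$i * x$i * (x$j * A$j$k * x$k)) = s * (x \<bullet> (A *v x))"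
      by (simp add: s inner_mat_vec_eq_sum sum_distrib_left[symmetric] sum_distrib_right[symmetric] mult.assoc)
         (simp only: mult.assoc[symmetric] sum_distrib_right[symmetric])
    show ?thesis
      by (simp only: sum.distrib sum_subtractf sum_distrib_left[of "s * s", symmetric]
          sum_distrib_left[of s, symmetric] diag row column full)
  qed
  finally show ?thesis by (simp add: algebra_simps)
qed

lemma projection_norm_sum:
  fixes x :: "real^'n"
  defines "s \<equiv> x \<bullet> x"
  defines "v \<equiv> \<lambda>i. s *\<^sub>R axis i 1 - x$i *\<^sub>R x"
  shows "(\<Sum>i\<in>UNIV. v i \<bullet> v i) = (real CARD('n) - 1) * s * s"
proof -
  have s: "s = (\<Sum>k\<in>UNIV. x$k * x$k)" by (simp add: s_def inner_vec_def)
  have vc: "\<And>i j. v i $ j = s * (if j = i then 1 else 0) - x$i * x$j"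
    by (simp add: v_def axis_def)
  have "(\<Sum>i\<in>UNIV. v i \<bullet> v i) = (\<Sum>i\<in>UNIV. \<Sum>j\<in>UNIV. (s * (if j = i then 1 else 0) - x$i * x$j) * (s * (if j = i then 1 else 0) - x$i * x$j))"
    by (simp add: inner_vec_def vc)
  also have "\<dots> = (\<Sum>i\<in>UNIV. \<Sum>j\<in>UNIV. s * s * (if j = i then 1 else 0) - 2 * s * (if j = i then x$i * x$j else 0) + x$i * x$i * (x$j * x$j))"
    by (intro sum.cong refl) (auto simp: algebra_simps)
  also have "\<dots> = real CARD('n) * s * s - 2 * s * s + s * s"
    by (simp add: sum.distrib sum_subtractf s sum_distrib_left[symmetric] sum_distrib_right[symmetric])
       (simp only: mult.assoc[symmetric] sum_distrib_right[symmetric])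
  finally show ?thesis by (simp add: algebra_simps)
qed

lemma pucci_admissible_trace_le:
  fixes A :: "real^'n^'n" and x :: "real^'n"
  assumes adm: "pucci_admissible l L A"
  shows "(x \<bullet> x) * trace A - x \<bullet> (A *v x) \<le> (real CARD('n) - 1) * L * (x \<bullet> x)"
proof (cases "x = 0")
  case False
  define s where "s = x \<bullet> x"
  define v where "v = (\<lambda>i. s *\<^sub>R axis i 1 - x$i *\<^sub>R x)"
  have s: "s > 0" using False by (simp add: s_def)
  \<comment> \<open>\<open>v i\<close> is \<open>|x|\<^sup>2\<close> times the projection of the \<open>i\<close>-th basis vector onto \<open>x\<^sup>\<bottom>\<close>; the \<open>N\<close>
      projections have total squared length \<open>N - 1\<close>.\<close>
  have "(\<Sum>i\<in>UNIV. v i \<bullet> (A *v v i)) \<le> (\<Sum>i\<in>UNIV. L * (v i \<bullet> v i))"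
    using adm by (intro sum_mono) (simp add: pucci_admissible_def)
  also have "\<dots> = L * ((real CARD('n) - 1) * s * s)"
    using projection_norm_sum[of x] by (simp add: s_def v_def sum_distrib_left[symmetric])
  finally have "s * (s * trace A - x \<bullet> (A *v x)) \<le> s * ((real CARD('n) - 1) * L * s)"
    using projection_quadratic_form_sum[of x A] by (simp add: s_def v_def algebra_simps)
  then show ?thesis using s by (simp add: s_def)
qed simp

lemma trace_mult_scalar_plus_dyad:
  fixes A :: "real^'n^'n" and x :: "real^'n"
  shows "trace (A ** (\<chi> i j. \<alpha> * (if i = j then 1 else 0) + \<delta> * x$i * x$j)) = \<alpha> * trace A + \<delta> * (x \<bullet> (A *v x))"
proof -
  have row: "(\<Sum>k\<in>UNIV. A$i$k * (\<alpha> * (if k = i then 1 else 0) + \<delta> * x$k * x$i))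
      = \<alpha> * A$i$i + \<delta> * (x$i * (\<Sum>k\<in>UNIV. A$i$k * x$k))" for i
  proof -
    have "(\<Sum>k\<in>UNIV. A$i$k * (\<alpha> * (if k = i then 1 else 0) + \<delta> * x$k * x$i))
        = (\<Sum>k\<in>UNIV. (if k = i then \<alpha> * A$i$k else 0) + \<delta> * (x$i * (A$i$k * x$k)))"
      by (intro sum.cong refl) (auto simp: algebra_simps)
    then show ?thesis by (simp add: sum.distrib sum_distrib_left)
  qed
  show ?thesis
    by (simp add: trace_def matrix_matrix_mult_def row sum.distrib sum_distrib_left
        inner_vec_def matrix_vector_mult_def)
qed

lemma pucci_admissible_mat:
  assumes "0 \<le> l" "l \<le> L" shows "pucci_admissible l L (mat l :: real^'n^'n)"
proof -
  have "mat l *v x = l *\<^sub>R x" for x :: "real^'n"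
    by (simp add: vec_eq_iff matrix_vector_mult_def mat_def if_distrib[of "\<lambda>c. c * _"] cong: if_cong)
  then show ?thesis
    using assms by (auto simp: pucci_admissible_def intro!: mult_right_mono)
qed

definition pucci_beta :: "real \<Rightarrow> real \<Rightarrow> nat \<Rightarrow> real" where
  "pucci_beta l L N = L / l * (real N - 1) + 1"

text \<open>The matrix \<open>\<alpha> I + \<delta> x x\<^sup>T\<close> has the eigenvalue \<open>\<alpha> \<le> 0\<close> on \<open>x\<^sup>\<bottom>\<close> and \<open>\<alpha> + \<delta> |x|\<^sup>2 \<ge> 0\<close> on \<open>x\<close>.\<close>
lemma pucci_max_scalar_plus_dyad_le:
  fixes x :: "real^'n"
  assumes l: "0 \<le> l" "l \<le> L" and x: "x \<noteq> 0" and \<alpha>: "\<alpha> \<le> 0" and \<alpha>\<delta>: "0 \<le> \<alpha> + \<delta> * (x \<bullet> x)"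
  shows "pucci_max l L (\<chi> i j. \<alpha> * (if i = j then 1 else 0) + \<delta> * x$i * x$j)
     \<le> - (\<alpha> + \<delta> * (x \<bullet> x)) * l - \<alpha> * (real CARD('n) - 1) * L"
  unfolding pucci_max_def
proof (rule cSUP_least)
  show "{A. pucci_admissible l L A} \<noteq> {}" using pucci_admissible_mat[OF l] by blast
next
  fix A :: "real^'n^'n" assume "A \<in> {A. pucci_admissible l L A}"
  then have adm: "pucci_admissible l L A" by simp
  define s where "s = x \<bullet> x"
  define q where "q = x \<bullet> (A *v x)"
  have s: "s > 0" using x by (simp add: s_def)
  have q: "l * s \<le> q" using adm by (simp add: pucci_admissible_def s_def q_def)
  have "s * trace A \<le> q + (real CARD('n) - 1) * L * s"
    using pucci_admissible_trace_le[OF adm, of x] by (simp add: s_def q_def)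
  then have "(-\<alpha>) * (s * trace A) \<le> (-\<alpha>) * (q + (real CARD('n) - 1) * L * s)"
    using \<alpha> by (intro mult_left_mono) auto
  moreover have "(\<alpha> + \<delta> * s) * (l * s) \<le> (\<alpha> + \<delta> * s) * q"
    using q \<alpha>\<delta> by (intro mult_left_mono) (auto simp: s_def)
  ultimately have "s * (- (\<alpha> * trace A + \<delta> * q)) \<le> s * (- (\<alpha> + \<delta> * s) * l - \<alpha> * (real CARD('n) - 1) * L)"
    by (simp add: algebra_simps)
  then show "- trace (A ** (\<chi> i j. \<alpha> * (if i = j then 1 else 0) + \<delta> * x$i * x$j))
     \<le> - (\<alpha> + \<delta> * (x \<bullet> x)) * l - \<alpha> * (real CARD('n) - 1) * L"
    using s by (simp add: trace_mult_scalar_plus_dyad q_def s_def)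
qed

lemma C2_with_radial:
  fixes G G' G'' :: "real \<Rightarrow> real"
  assumes d1: "\<And>t. t \<ge> 0 \<Longrightarrow> (G has_real_derivative G' t) (at t)"
    and d2: "\<And>t. t \<ge> 0 \<Longrightarrow> (G' has_real_derivative G'' t) (at t)"
    and c2: "\<And>t. t \<ge> 0 \<Longrightarrow> isCont G'' t"
  shows "C2_with (\<lambda>x::real^'n. G (x \<bullet> x)) (\<lambda>x. (2 * G' (x \<bullet> x)) *\<^sub>R x)
     (\<lambda>x. \<chi> i j. 2 * G' (x \<bullet> x) * (if i = j then 1 else 0) + 4 * G'' (x \<bullet> x) * x$i * x$j)"
  unfolding C2_with_def
proof (intro conjI allI)
  fix x :: "real^'n"
  have ix: "((\<lambda>x. x \<bullet> x) has_derivative (\<lambda>h. x \<bullet> h + h \<bullet> x)) (at x)"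
    by (auto intro!: derivative_eq_intros)
  show "((\<lambda>x. G (x \<bullet> x)) has_derivative (\<lambda>h. (2 * G' (x \<bullet> x)) *\<^sub>R x \<bullet> h)) (at x)"
    using DERIV_compose_FDERIV[OF d1 ix]
    by (rule has_derivative_eq_rhs) (auto simp: inner_commute algebra_simps)
  have k: "((\<lambda>x. 2 * G' (x \<bullet> x)) has_derivative (\<lambda>h. (x \<bullet> h + h \<bullet> x) * (2 * G'' (x \<bullet> x)))) (at x)"
    using DERIV_compose_FDERIV[OF DERIV_cmult[OF d2, of "x \<bullet> x" 2] ix] by simp
  have hess: "(\<chi> i j. 2 * G' (x \<bullet> x) * (if i = j then 1 else 0) + 4 * G'' (x \<bullet> x) * x$i * x$j) *v h
      = (2 * G' (x \<bullet> x)) *\<^sub>R h + ((x \<bullet> h + h \<bullet> x) * (2 * G'' (x \<bullet> x))) *\<^sub>R x" for h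
  proof (rule iffD2[OF vec_eq_iff], rule allI)
    fix i
    have "((\<chi> i j. 2 * G' (x \<bullet> x) * (if i = j then 1 else 0) + 4 * G'' (x \<bullet> x) * x$i * x$j) *v h) $ i
       = (\<Sum>j\<in>UNIV. (if i = j then 2 * G' (x \<bullet> x) * h$j else 0) + 4 * G'' (x \<bullet> x) * x$i * (x$j * h$j))"
      by (simp add: matrix_vector_mult_def algebra_simps) (intro sum.cong refl, auto)
    also have "\<dots> = 2 * G' (x \<bullet> x) * h$i + 4 * G'' (x \<bullet> x) * x$i * (x \<bullet> h)"
      by (simp add: sum.distrib sum_distrib_left inner_vec_def)
    finally show "((\<chi> i j. 2 * G' (x \<bullet> x) * (if i = j then 1 else 0) + 4 * G'' (x \<bullet> x) * x$i * x$j) *v h) $ i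
      = ((2 * G' (x \<bullet> x)) *\<^sub>R h + ((x \<bullet> h + h \<bullet> x) * (2 * G'' (x \<bullet> x))) *\<^sub>R x) $ i"
      by (simp add: inner_commute algebra_simps)
  qed
  show "((\<lambda>x. (2 * G' (x \<bullet> x)) *\<^sub>R x) has_derivative
      (\<lambda>h. (\<chi> i j. 2 * G' (x \<bullet> x) * (if i = j then 1 else 0) + 4 * G'' (x \<bullet> x) * x$i * x$j) *v h)) (at x)"
    unfolding hess using has_derivative_scaleR[OF k has_derivative_ident] by simp
next
  have cG': "isCont G' t" if "t \<ge> 0" for t using d2[OF that] by (rule DERIV_isCont)
  have cinner: "continuous_on UNIV (\<lambda>x::real^'n. x \<bullet> x)" by (intro continuous_intros)
  have "continuous_on UNIV (\<lambda>x::real^'n. G' (x \<bullet> x))" "continuous_on UNIV (\<lambda>x::real^'n. G'' (x \<bullet> x))"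
    by (rule continuous_on_compose2[OF _ cinner, of "{0..}"];
        auto intro!: continuous_at_imp_continuous_on cG' c2)+
  then show "continuous_on UNIV (\<lambda>x::real^'n. \<chi> i j. 2 * G' (x \<bullet> x) * (if i = j then 1 else 0) + 4 * G'' (x \<bullet> x) * x$i * x$j)"
    by (intro continuous_intros)
qed

lemma C2_with_barrier:
  assumes "0 < \<epsilon>"
  shows "C2_with (\<lambda>x::real^'n. a * ((x \<bullet> x + \<epsilon>) powr (-\<nu>/2) - C))
     (\<lambda>x. (2 * (a * (-\<nu>/2) * (x \<bullet> x + \<epsilon>) powr (-\<nu>/2 - 1))) *\<^sub>R x)
     (\<lambda>x. \<chi> i j. 2 * (a * (-\<nu>/2) * (x \<bullet> x + \<epsilon>) powr (-\<nu>/2 - 1)) * (if i = j then 1 else 0)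
        + 4 * (a * (-\<nu>/2) * (-\<nu>/2 - 1) * (x \<bullet> x + \<epsilon>) powr (-\<nu>/2 - 2)) * x$i * x$j)"
proof (rule C2_with_radial)
  fix t :: real assume "0 \<le> t"
  then have t: "0 < t + \<epsilon>" using assms by simp
  show "((\<lambda>t. a * ((t + \<epsilon>) powr (-\<nu>/2) - C)) has_real_derivative a * (-\<nu>/2) * (t + \<epsilon>) powr (-\<nu>/2 - 1)) (at t)"
    using t by (auto intro!: derivative_eq_intros)
  show "((\<lambda>t. a * (-\<nu>/2) * (t + \<epsilon>) powr (-\<nu>/2 - 1)) has_real_derivative
      a * (-\<nu>/2) * (-\<nu>/2 - 1) * (t + \<epsilon>) powr (-\<nu>/2 - 2)) (at t)"
    using t by (auto intro!: derivative_eq_intros simp: field_simps)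
  show "isCont (\<lambda>t. a * (-\<nu>/2) * (-\<nu>/2 - 1) * (t + \<epsilon>) powr (-\<nu>/2 - 2)) t"
    using t by (auto intro!: continuous_intros)
qed

lemma barrier_pucci_max_le:
  fixes x :: "real^'n"
  assumes a: "0 < a" and \<nu>: "0 < \<nu>" and \<epsilon>: "0 < \<epsilon>" and l: "0 < l" "l \<le> L" and x: "x \<noteq> 0"
    and \<epsilon>x: "\<epsilon> \<le> (\<nu> + 1) * (x \<bullet> x)"
  shows "pucci_max l L (\<chi> i j. 2 * (a * (-\<nu>/2) * (x \<bullet> x + \<epsilon>) powr (-\<nu>/2 - 1)) * (if i = j then 1 else 0)
            + 4 * (a * (-\<nu>/2) * (-\<nu>/2 - 1) * (x \<bullet> x + \<epsilon>) powr (-\<nu>/2 - 2)) * x$i * x$j)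
     \<le> a * \<nu> * l * (x \<bullet> x + \<epsilon>) powr (-\<nu>/2 - 2) *
        ((x \<bullet> x) * (pucci_beta l L CARD('n) - 2 - \<nu>) + \<epsilon> * pucci_beta l L CARD('n))"
proof -
  define s where "s = x \<bullet> x"
  define P where "P = (s + \<epsilon>) powr (-\<nu>/2 - 2)"
  have s: "s > 0" using x by (simp add: s_def)
  have P: "P > 0" using s \<epsilon> by (simp add: P_def)
  have "(s + \<epsilon>) powr (-\<nu>/2 - 1) = (s + \<epsilon>) powr (1 + (-\<nu>/2 - 2))"
    by (rule arg_cong[where f = "(powr) (s + \<epsilon>)"]) simp
  also have "\<dots> = (s + \<epsilon>) * P" unfolding powr_add P_def using s \<epsilon> by simp
  finally have Q: "(s + \<epsilon>) powr (-\<nu>/2 - 1) = (s + \<epsilon>) * P" .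
  define \<alpha> where "\<alpha> = 2 * (a * (-\<nu>/2) * (s + \<epsilon>) powr (-\<nu>/2 - 1))"
  define \<delta> where "\<delta> = 4 * (a * (-\<nu>/2) * (-\<nu>/2 - 1) * P)"
  have \<alpha>_eq: "\<alpha> = - (a * \<nu> * P) * (s + \<epsilon>)" unfolding \<alpha>_def Q by (simp add: algebra_simps)
  have \<delta>_eq: "\<delta> = (a * \<nu> * P) * (\<nu> + 2)" by (simp add: \<delta>_def algebra_simps)
  have aP: "a * \<nu> * P > 0" using a \<nu> P by simp
  have "\<alpha> \<le> 0" using aP s \<epsilon> by (simp add: \<alpha>_eq)
  moreover have "\<alpha> + \<delta> * s = (a * \<nu> * P) * ((\<nu> + 1) * s - \<epsilon>)" by (simp add: \<alpha>_eq \<delta>_eq algebra_simps)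
  then have "\<alpha> + \<delta> * (x \<bullet> x) \<ge> 0" using aP \<epsilon>x by (simp add: s_def)
  ultimately have "pucci_max l L (\<chi> i j. \<alpha> * (if i = j then 1 else 0) + \<delta> * x$i * x$j)
     \<le> - (\<alpha> + \<delta> * (x \<bullet> x)) * l - \<alpha> * (real CARD('n) - 1) * L"
    using l by (intro pucci_max_scalar_plus_dyad_le x) auto
  also have "- (\<alpha> + \<delta> * (x \<bullet> x)) * l - \<alpha> * (real CARD('n) - 1) * L
      = a * \<nu> * l * P * (s * (pucci_beta l L CARD('n) - 2 - \<nu>) + \<epsilon> * pucci_beta l L CARD('n))"
    using l by (simp add: \<alpha>_eq \<delta>_eq s_def[symmetric] pucci_beta_def field_simps)
  finally show ?thesis unfolding \<alpha>_def \<delta>_def P_def s_def by (simp add: mult_ac)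
qed

lemma lsc_attains_min:
  fixes f :: "'a::topological_space \<Rightarrow> real"
  assumes f: "lsc f" and K: "compact K" "K \<noteq> {}"
  shows "\<exists>x\<in>K. \<forall>y\<in>K. f x \<le> f y"
proof (rule ccontr)
  assume "\<not> ?thesis"
  then have "K \<subseteq> (\<Union>y\<in>K. {x. f y < f x})" by (auto simp: not_le)
  then obtain F where F: "F \<subseteq> K" "finite F" "K \<subseteq> (\<Union>y\<in>F. {x. f y < f x})"
    using compactE_image[OF K(1), of K "\<lambda>y. {x. f y < f x}"] f by (metis lsc_def)
  then have "F \<noteq> {}" using K by auto
  then obtain y0 where y0: "y0 \<in> F" "\<forall>y\<in>F. f y0 \<le> f y"
    using F(2) by (metis arg_min_if_finite(1) arg_min_if_finite(2) not_le)
  then obtain y where "y \<in> F" "f y < f y0" using F by blast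
  then show False using y0 by auto
qed

lemma lsc_diff_continuous:
  fixes u w :: "'a::topological_space \<Rightarrow> real"
  assumes u: "lsc u" and w: "continuous_on UNIV w"
  shows "lsc (\<lambda>x. u x - w x)"
  unfolding lsc_def
proof
  fix a
  have "{x. a < u x - w x} = (\<Union>q. {x. q < u x} \<inter> {x. w x < q - a})"
  proof (intro equalityI subsetI)
    fix x assume "x \<in> {x. a < u x - w x}"
    then show "x \<in> (\<Union>q. {x. q < u x} \<inter> {x. w x < q - a})"
      by (intro UN_I[of "(u x + w x + a)/2"]) auto
  qed auto
  moreover have "open ({x. q < u x} \<inter> {x. w x < q - a})" for q
    using u w by (intro open_Int) (auto simp: lsc_def intro: open_Collect_less continuous_intros)
  ultimately show "open {x. a < u x - w x}" by auto
qed

lemma C2_with_continuous: "C2_with w Dw Hw \<Longrightarrow> continuous_on UNIV w"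
  unfolding C2_with_def by (meson continuous_at_imp_continuous_on has_derivative_continuous)

text \<open>A strict classical subsolution \<open>w\<close> cannot touch the supersolution \<open>u\<close> from below inside
  the annulus, so the minimum of \<open>u - w\<close> over the closed annulus lies on its boundary.\<close>
lemma visc_super_annulus_comparison:
  fixes u w :: "real^'n \<Rightarrow> real"
  assumes vs: "visc_super G u" and w: "C2_with w Dw Hw"
    and strict: "\<And>x. R1 < norm x \<Longrightarrow> norm x < R3 \<Longrightarrow> G x (u x) (Dw x) (Hw x) < 0"
    and boundary: "\<And>x. norm x = R1 \<or> norm x = R3 \<Longrightarrow> w x \<le> u x"
    and x: "R1 \<le> norm x" "norm x \<le> R3"
  shows "w x \<le> u x"
proof -
  define K where "K = {y::real^'n. R1 \<le> norm y \<and> norm y \<le> R3}"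
  have "K = cball 0 R3 - ball 0 R1" by (auto simp: K_def)
  then have "compact K" by (simp add: compact_diff)
  moreover have "x \<in> K" using x by (simp add: K_def)
  moreover have "lsc (\<lambda>y. u y - w y)"
    using vs w by (intro lsc_diff_continuous C2_with_continuous) (auto simp: visc_super_def)
  ultimately obtain x0 where x0: "x0 \<in> K" "\<forall>y\<in>K. u x0 - w x0 \<le> u y - w y"
    using lsc_attains_min by blast
  show ?thesis
  proof (rule ccontr)
    assume "\<not> w x \<le> u x"
    then have "u x0 - w x0 < 0" using x0 \<open>x \<in> K\<close> by force
    then have inside: "x0 \<in> {y. R1 < norm y \<and> norm y < R3}"
      using boundary[of x0] x0(1) by (force simp: K_def)
    have "open {y::real^'n. R1 < norm y \<and> norm y < R3}"
      by (intro open_Collect_conj open_Collect_less continuous_intros)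
    then have "\<forall>\<^sub>F y in at x0. y \<in> K"
      using eventually_at_in_open'[OF _ inside] by (auto simp: K_def elim: eventually_mono)
    then have "\<forall>\<^sub>F y in at x0. u y - w y \<ge> u x0 - w x0"
      by eventually_elim (use x0 in auto)
    then have "G x0 (u x0) (Dw x0) (Hw x0) \<ge> 0" using vs w unfolding visc_super_def by blast
    then show False using strict inside by force
  qed
qed

lemma ball_min_le: "(\<And>x. 0 \<le> u x) \<Longrightarrow> norm x \<le> R \<Longrightarrow> ball_min u R \<le> u x"
  unfolding ball_min_def by (intro cInf_lower) (auto intro!: bdd_belowI[of _ 0])

lemma ball_min_ge: "0 \<le> R \<Longrightarrow> (\<And>x. norm x \<le> R \<Longrightarrow> c \<le> u x) \<Longrightarrow> c \<le> ball_min u R"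
  unfolding ball_min_def by (intro cInf_greatest) auto

lemma ball_min_nonneg: "(\<And>x. 0 \<le> u x) \<Longrightarrow> 0 \<le> R \<Longrightarrow> 0 \<le> ball_min u R"
  by (rule ball_min_ge) auto

lemma ball_min_antimono: "(\<And>x. 0 \<le> u x) \<Longrightarrow> 0 \<le> R1 \<Longrightarrow> R1 \<le> R2 \<Longrightarrow> ball_min u R2 \<le> ball_min u R1"
  by (rule ball_min_ge) (auto intro: ball_min_le)

lemma ball_min_ge_radial_minorant:
  fixes g :: "real \<Rightarrow> real" and u :: "real^'n \<Rightarrow> real"
  assumes "0 \<le> R" and g: "\<And>r s. 0 \<le> r \<Longrightarrow> r \<le> s \<Longrightarrow> g s \<le> g r"
    and minorant: "\<And>x. norm x \<le> R \<Longrightarrow> g (norm x) \<le> u x"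
  shows "g R \<le> ball_min u R"
proof (rule ball_min_ge[OF \<open>0 \<le> R\<close>])
  fix x :: "real^'n" assume x: "norm x \<le> R"
  show "g R \<le> u x" using g[OF norm_ge_zero x] minorant[OF x] by linarith
qed

text \<open>The barrier \<open>w = a ((|x|\<^sup>2 + \<epsilon>)\<^bsup>-\<nu>/2\<^esup> - C)\<close> equals \<open>m(R\<^sub>1)\<close> on \<open>|x| = R\<^sub>1\<close> and \<open>0\<close> on
  \<open>|x| = R\<^sub>3\<close>; it stays below \<open>u\<close> on the ball of radius \<open>R\<^sub>1\<close> and, by comparison, on the annulus.\<close>
lemma ball_min_barrier_lower_bound:
  fixes u F :: "real^'n \<Rightarrow> real"
  assumes vs: "visc_super (\<lambda>x r p M. pucci_max l L M - F p) u"
    and u0: "\<And>x. 0 \<le> u x" and l: "0 < l" "l \<le> L" and \<nu>: "0 < \<nu>" and \<epsilon>: "0 < \<epsilon>"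
    and R: "0 < R1" "R1 \<le> R2" "R2 < R3" and m1: "0 < ball_min u R1" and \<epsilon>R1: "\<epsilon> \<le> (\<nu> + 1) * R1\<^sup>2"
    and a_def: "a = ball_min u R1 / ((R1\<^sup>2 + \<epsilon>) powr (-\<nu>/2) - (R3\<^sup>2 + \<epsilon>) powr (-\<nu>/2))"
    and strict: "\<And>x::real^'n. R1 < norm x \<Longrightarrow> norm x < R3 \<Longrightarrow>
        a * \<nu> * l * (x \<bullet> x + \<epsilon>) powr (-\<nu>/2 - 2) *
          ((x \<bullet> x) * (pucci_beta l L CARD('n) - 2 - \<nu>) + \<epsilon> * pucci_beta l L CARD('n))
        < F ((2 * (a * (-\<nu>/2) * (x \<bullet> x + \<epsilon>) powr (-\<nu>/2 - 1))) *\<^sub>R x)"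
  shows "ball_min u R1 * ((R2\<^sup>2 + \<epsilon>) powr (-\<nu>/2) - (R3\<^sup>2 + \<epsilon>) powr (-\<nu>/2))
           / ((R1\<^sup>2 + \<epsilon>) powr (-\<nu>/2) - (R3\<^sup>2 + \<epsilon>) powr (-\<nu>/2)) \<le> ball_min u R2"
proof -
  define C where "C = (R3\<^sup>2 + \<epsilon>) powr (-\<nu>/2)"
  define D where "D = (\<lambda>r::real. (r\<^sup>2 + \<epsilon>) powr (-\<nu>/2))"
  define w where "w = (\<lambda>x::real^'n. a * ((x \<bullet> x + \<epsilon>) powr (-\<nu>/2) - C))"
  have D_antimono: "D r2 \<le> D r1" if "0 \<le> r1" "r1 \<le> r2" for r1 r2
    unfolding D_def using that \<epsilon> \<nu> by (intro powr_mono2') (auto intro: power_mono add_nonneg_pos)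
  have DC: "C < D R1" unfolding C_def D_def using R \<epsilon> \<nu>
    by (intro powr_less_mono2_neg) (auto intro: power_strict_mono add_nonneg_pos)
  have a: "a > 0" using a_def m1 DC by (simp add: C_def D_def)
  have w_norm: "w x = a * (D (norm x) - C)" for x by (simp add: w_def D_def power2_norm_eq_inner)
  have w_R1: "a * (D R1 - C) = ball_min u R1" using a_def DC by (simp add: C_def D_def)
  have w_C2: "C2_with w (\<lambda>x. (2 * (a * (-\<nu>/2) * (x \<bullet> x + \<epsilon>) powr (-\<nu>/2 - 1))) *\<^sub>R x)
     (\<lambda>x. \<chi> i j. 2 * (a * (-\<nu>/2) * (x \<bullet> x + \<epsilon>) powr (-\<nu>/2 - 1)) * (if i = j then 1 else 0)
        + 4 * (a * (-\<nu>/2) * (-\<nu>/2 - 1) * (x \<bullet> x + \<epsilon>) powr (-\<nu>/2 - 2)) * x$i * x$j)"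
    unfolding w_def by (rule C2_with_barrier[OF \<epsilon>])
  have below_annulus: "w x \<le> u x" if "R1 \<le> norm x" "norm x \<le> R3" for x
  proof (rule visc_super_annulus_comparison[OF vs w_C2 _ _ that])
    fix x :: "real^'n" assume x: "R1 < norm x" "norm x < R3"
    have "x \<noteq> 0" using x R by auto
    moreover have "R1\<^sup>2 \<le> x \<bullet> x"
      using x R power_mono[of R1 "norm x" 2] by (simp add: power2_norm_eq_inner)
    then have "(\<nu> + 1) * R1\<^sup>2 \<le> (\<nu> + 1) * (x \<bullet> x)" using \<nu> by (intro mult_left_mono) auto
    then have "\<epsilon> \<le> (\<nu> + 1) * (x \<bullet> x)" using \<epsilon>R1 by linarith
    ultimately show "pucci_max l L (\<chi> i j. 2 * (a * (-\<nu>/2) * (x \<bullet> x + \<epsilon>) powr (-\<nu>/2 - 1)) * (if i = j then 1 else 0)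
        + 4 * (a * (-\<nu>/2) * (-\<nu>/2 - 1) * (x \<bullet> x + \<epsilon>) powr (-\<nu>/2 - 2)) * x$i * x$j)
      - F ((2 * (a * (-\<nu>/2) * (x \<bullet> x + \<epsilon>) powr (-\<nu>/2 - 1))) *\<^sub>R x) < 0"
      using barrier_pucci_max_le[OF a \<nu> \<epsilon> l] strict[OF x] by fastforce
  next
    fix x :: "real^'n" assume "norm x = R1 \<or> norm x = R3"
    then show "w x \<le> u x"
      using w_R1 ball_min_le[OF u0, of x R1] u0[of x] by (auto simp: w_norm C_def D_def)
  qed
  have "a * (D (max R2 R1) - C) \<le> ball_min u R2"
  proof (rule ball_min_ge_radial_minorant)
    show "a * (D (max s R1) - C) \<le> a * (D (max r R1) - C)" if "0 \<le> r" "r \<le> s" for r s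
      using a D_antimono[of "max r R1" "max s R1"] that R by (intro mult_left_mono) auto
    show "a * (D (max (norm x) R1) - C) \<le> u x" if "norm x \<le> R2" for x
      using w_R1 ball_min_le[OF u0, of x R1] below_annulus[of x] that R
      by (cases "norm x \<le> R1") (auto simp: w_norm max_def)
  qed (use R in auto)
  then show ?thesis using a_def R by (simp add: C_def D_def max_def)
qed

lemma barrier_bound_limit:
  fixes m1 m2 :: real
  assumes \<nu>: "0 < \<nu>" and R: "0 < R1" "R1 \<le> R2"
    and bound: "\<And>R3. R2 < R3 \<Longrightarrow> \<forall>\<^sub>F \<epsilon> in at_right 0.
       m1 * ((R2\<^sup>2 + \<epsilon>) powr (-\<nu>/2) - (R3\<^sup>2 + \<epsilon>) powr (-\<nu>/2))
           / ((R1\<^sup>2 + \<epsilon>) powr (-\<nu>/2) - (R3\<^sup>2 + \<epsilon>) powr (-\<nu>/2)) \<le> m2"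
  shows "m1 * R1 powr \<nu> \<le> m2 * R2 powr \<nu>"
proof -
  have sq: "(r\<^sup>2) powr (-(\<nu>/2)) = r powr (-\<nu>)" if "0 \<le> r" for r
    using power2_powr_half[OF that, of "-\<nu>"] by simp
  have limit_\<epsilon>: "m1 * (R2 powr (-\<nu>) - R3 powr (-\<nu>)) / (R1 powr (-\<nu>) - R3 powr (-\<nu>)) \<le> m2"
    if R3: "R2 < R3" for R3
  proof -
    have "R1 powr (-\<nu>) - R3 powr (-\<nu>) \<noteq> 0"
      using R R3 \<nu> powr_less_mono2_neg[of "-\<nu>" R1 R3] by auto
    then have "((\<lambda>\<epsilon>. m1 * ((R2\<^sup>2 + \<epsilon>) powr (-\<nu>/2) - (R3\<^sup>2 + \<epsilon>) powr (-\<nu>/2))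
           / ((R1\<^sup>2 + \<epsilon>) powr (-\<nu>/2) - (R3\<^sup>2 + \<epsilon>) powr (-\<nu>/2)))
       \<longlongrightarrow> m1 * ((R2\<^sup>2 + 0) powr (-\<nu>/2) - (R3\<^sup>2 + 0) powr (-\<nu>/2))
           / ((R1\<^sup>2 + 0) powr (-\<nu>/2) - (R3\<^sup>2 + 0) powr (-\<nu>/2))) (at_right 0)"
      using R R3 by (intro tendsto_intros) (auto simp: sq)
    then have "((\<lambda>\<epsilon>. m1 * ((R2\<^sup>2 + \<epsilon>) powr (-\<nu>/2) - (R3\<^sup>2 + \<epsilon>) powr (-\<nu>/2))
           / ((R1\<^sup>2 + \<epsilon>) powr (-\<nu>/2) - (R3\<^sup>2 + \<epsilon>) powr (-\<nu>/2)))
       \<longlongrightarrow> m1 * (R2 powr (-\<nu>) - R3 powr (-\<nu>)) / (R1 powr (-\<nu>) - R3 powr (-\<nu>))) (at_right 0)"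
      using R R3 by (simp add: sq)
    then show ?thesis using bound[OF R3] by (intro tendsto_le[OF _ tendsto_const]) auto
  qed
  have "((\<lambda>R3. m1 * (R2 powr (-\<nu>) - R3 powr (-\<nu>)) / (R1 powr (-\<nu>) - R3 powr (-\<nu>)))
      \<longlongrightarrow> m1 * (R2 powr (-\<nu>) - 0) / (R1 powr (-\<nu>) - 0)) at_top"
    using R \<nu> by (intro tendsto_intros tendsto_neg_powr filterlim_ident) auto
  moreover have "\<forall>\<^sub>F R3 in at_top. m1 * (R2 powr (-\<nu>) - R3 powr (-\<nu>)) / (R1 powr (-\<nu>) - R3 powr (-\<nu>)) \<le> m2"
    using eventually_gt_at_top[of R2] by eventually_elim (rule limit_\<epsilon>)
  ultimately have "m1 * R2 powr (-\<nu>) / R1 powr (-\<nu>) \<le> m2"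
    by (intro tendsto_le[OF _ tendsto_const]) auto
  then have "m1 * R1 powr \<nu> / R2 powr \<nu> \<le> m2"
    by (simp add: powr_minus divide_inverse mult_ac)
  then show ?thesis using R by (simp add: pos_divide_le_eq)
qed

lemma ball_min_powr_mono_supercritical:
  fixes u :: "real^'n \<Rightarrow> real"
  assumes vs: "visc_super (\<lambda>x r p M. pucci_max l L M) u" and u0: "\<And>x. 0 \<le> u x"
    and l: "0 < l" "l \<le> L" and \<nu>: "0 < \<nu>" "pucci_beta l L CARD('n) - 2 < \<nu>"
    and R: "0 < R1" "R1 \<le> R2"
  shows "ball_min u R1 * R1 powr \<nu> \<le> ball_min u R2 * R2 powr \<nu>"
proof (cases "ball_min u R1 = 0")
  case True
  then show ?thesis using ball_min_nonneg[of u R2] u0 R by simp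
next
  case False
  then have m1: "0 < ball_min u R1" using ball_min_nonneg[of u R1] u0 R by simp
  define \<beta> where "\<beta> = pucci_beta l L CARD('n)"
  have vs0: "visc_super (\<lambda>x r p M. pucci_max l L M - (\<lambda>p. 0) p) u" using vs by simp
  have "\<beta> > 0" using l by (simp add: \<beta>_def pucci_beta_def add_nonneg_pos)
  show ?thesis
  proof (rule barrier_bound_limit[OF \<nu>(1) R])
    fix R3 assume R3: "R2 < R3"
    define \<epsilon>0 where "\<epsilon>0 = min ((\<nu> + 1) * R1\<^sup>2) (R1\<^sup>2 * (\<nu> + 2 - \<beta>) / \<beta>)"
    have "\<epsilon>0 > 0" using R \<nu> \<open>\<beta> > 0\<close> by (simp add: \<epsilon>0_def \<beta>_def)
    then have "\<forall>\<^sub>F \<epsilon> in at_right 0. 0 < \<epsilon> \<and> \<epsilon> < \<epsilon>0"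
      by (auto simp: eventually_at_right_field intro!: exI[of _ \<epsilon>0])
    then show "\<forall>\<^sub>F \<epsilon> in at_right 0.
       ball_min u R1 * ((R2\<^sup>2 + \<epsilon>) powr (-\<nu>/2) - (R3\<^sup>2 + \<epsilon>) powr (-\<nu>/2))
           / ((R1\<^sup>2 + \<epsilon>) powr (-\<nu>/2) - (R3\<^sup>2 + \<epsilon>) powr (-\<nu>/2)) \<le> ball_min u R2"
    proof eventually_elim
      case (elim \<epsilon>)
      then have \<epsilon>: "0 < \<epsilon>" "\<epsilon> \<le> (\<nu> + 1) * R1\<^sup>2" and \<epsilon>\<beta>: "\<epsilon> * \<beta> < R1\<^sup>2 * (\<nu> + 2 - \<beta>)"
        using \<open>\<beta> > 0\<close> by (auto simp: \<epsilon>0_def pos_less_divide_eq)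
      define a where "a = ball_min u R1 / ((R1\<^sup>2 + \<epsilon>) powr (-\<nu>/2) - (R3\<^sup>2 + \<epsilon>) powr (-\<nu>/2))"
      have "(R3\<^sup>2 + \<epsilon>) powr (-\<nu>/2) < (R1\<^sup>2 + \<epsilon>) powr (-\<nu>/2)" using R R3 \<epsilon> \<nu>
        by (intro powr_less_mono2_neg) (auto intro: power_strict_mono add_nonneg_pos)
      then have a: "a > 0" using m1 by (simp add: a_def)
      show ?case
      proof (rule ball_min_barrier_lower_bound[OF vs0 u0 l \<nu>(1) \<epsilon>(1) R(1,2) R3 m1 \<epsilon>(2) a_def])
        fix x :: "real^'n" assume x: "R1 < norm x" "norm x < R3"
        have "R1\<^sup>2 \<le> x \<bullet> x" using x R power_mono[of R1 "norm x" 2] by (simp add: power2_norm_eq_inner)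
        then have "(x \<bullet> x) * (\<beta> - 2 - \<nu>) + \<epsilon> * \<beta> < 0"
          using \<epsilon>\<beta> \<nu>(2) mult_right_mono_neg[of "R1\<^sup>2" "x \<bullet> x" "\<beta> - 2 - \<nu>"] by (simp add: \<beta>_def algebra_simps)
        moreover have "0 < x \<bullet> x + \<epsilon>" using \<epsilon> by (simp add: add_nonneg_pos)
        then have "0 < a * \<nu> * l * (x \<bullet> x + \<epsilon>) powr (-\<nu>/2 - 2)"
          using a \<nu> l by simp
        ultimately show "a * \<nu> * l * (x \<bullet> x + \<epsilon>) powr (-\<nu>/2 - 2) *
            ((x \<bullet> x) * (pucci_beta l L CARD('n) - 2 - \<nu>) + \<epsilon> * pucci_beta l L CARD('n))
          < (\<lambda>p. 0) ((2 * (a * (-\<nu>/2) * (x \<bullet> x + \<epsilon>) powr (-\<nu>/2 - 1))) *\<^sub>R x)"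
          by (simp add: \<beta>_def mult_pos_neg)
      qed
    qed
  qed
qed

lemma ball_min_powr_mono:
  fixes u :: "real^'n \<Rightarrow> real"
  assumes vs: "visc_super (\<lambda>x r p M. pucci_max l L M) u" and u0: "\<And>x. 0 \<le> u x"
    and l: "0 < l" "l \<le> L" and \<beta>: "2 < pucci_beta l L CARD('n)"
  shows "mono_on {0<..} (\<lambda>R. ball_min u R * R powr (pucci_beta l L CARD('n) - 2))"
proof (rule mono_onI)
  fix R1 R2 :: real assume "R1 \<in> {0<..}" "R2 \<in> {0<..}" "R1 \<le> R2"
  then have R: "0 < R1" "R1 \<le> R2" by auto
  let ?\<nu>0 = "pucci_beta l L CARD('n) - 2"
  have lim: "((\<lambda>\<nu>. ball_min u R1 * R1 powr \<nu>) \<longlongrightarrow> ball_min u R1 * R1 powr ?\<nu>0) (at_right ?\<nu>0)"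
    "((\<lambda>\<nu>. ball_min u R2 * R2 powr \<nu>) \<longlongrightarrow> ball_min u R2 * R2 powr ?\<nu>0) (at_right ?\<nu>0)"
    using R by (auto intro!: tendsto_eq_intros)
  have "\<forall>\<^sub>F \<nu> in at_right ?\<nu>0. ball_min u R1 * R1 powr \<nu> \<le> ball_min u R2 * R2 powr \<nu>"
    using \<beta> by (auto simp: eventually_at_right_field intro!: exI[of _ "?\<nu>0 + 1"]
        ball_min_powr_mono_supercritical[OF vs u0 l _ _ R])
  then show "ball_min u R1 * R1 powr ?\<nu>0 \<le> ball_min u R2 * R2 powr ?\<nu>0"
    using tendsto_le[OF _ lim(2) lim(1)] by simp
qed

lemma barrier_scale_ge:
  fixes m :: real
  assumes m: "0 \<le> m" and R: "0 < R1" "R1 < R3" and \<epsilon>: "0 \<le> \<epsilon>" and \<nu>: "0 < \<nu>"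
  shows "m * R1 powr \<nu> \<le> m / ((R1\<^sup>2 + \<epsilon>) powr (-\<nu>/2) - (R3\<^sup>2 + \<epsilon>) powr (-\<nu>/2))"
proof -
  define D1 where "D1 = (R1\<^sup>2 + \<epsilon>) powr (-\<nu>/2)"
  define C where "C = (R3\<^sup>2 + \<epsilon>) powr (-\<nu>/2)"
  have "R1 powr \<nu> = (R1\<^sup>2) powr (\<nu>/2)" using power2_powr_half[of R1 \<nu>] R by simp
  also have "\<dots> \<le> (R1\<^sup>2 + \<epsilon>) powr (\<nu>/2)" using \<epsilon> \<nu> by (intro powr_mono2) auto
  finally have "m * R1 powr \<nu> \<le> m / D1" using m by (simp add: D1_def powr_minus_divide mult_left_mono)
  also have "\<dots> \<le> m / (D1 - C)"
  proof -
    have "C < D1" unfolding C_def D1_def using R \<epsilon> \<nu>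
      by (intro powr_less_mono2_neg) (auto intro: power_strict_mono add_pos_nonneg)
    moreover have "0 < R3\<^sup>2 + \<epsilon>" using R \<epsilon> by (intro add_pos_nonneg) auto
    then have "0 < C" by (simp add: C_def)
    ultimately show ?thesis using m by (intro divide_left_mono) auto
  qed
  finally show ?thesis by (simp add: D1_def C_def)
qed

lemma barrier_pucci_term_le:
  fixes A S T X B \<nu> :: real
  assumes A: "0 < A" and S: "0 < S" "S \<le> T" and X: "X \<le> S * B" and B: "0 \<le> B" and \<nu>: "0 < \<nu>"
  shows "A * T powr (-\<nu>/2 - 2) * X \<le> A * S powr (-\<nu>/2 - 1) * B"
proof -
  have "A * T powr (-\<nu>/2 - 2) * X \<le> A * T powr (-\<nu>/2 - 2) * (S * B)"
    using A X by (intro mult_left_mono) auto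
  also have "\<dots> \<le> A * S powr (-\<nu>/2 - 2) * (S * B)"
    using A S B \<nu> by (intro mult_right_mono mult_left_mono powr_mono2') auto
  also have "\<dots> = A * S powr (-\<nu>/2 - 1) * B"
  proof -
    have "S powr (-\<nu>/2 - 1) = S powr ((-\<nu>/2 - 2) + 1)"
      by (rule arg_cong[where f = "(powr) S"]) simp
    also have "\<dots> = S powr (-\<nu>/2 - 2) * S" by (subst powr_add) (use S in simp)
    finally show ?thesis by (simp add: mult_ac)
  qed
  finally show ?thesis .
qed

lemma barrier_scale_powr_ge:
  fixes A S R m \<gamma> \<nu> :: real
  assumes A: "\<nu> * m * R powr \<nu> \<le> A" and m: "0 < m" and R: "0 < R" and S: "R\<^sup>2 \<le> S"
    and \<gamma>: "1 < \<gamma>" "\<gamma> * (\<nu> + 1) \<le> \<nu> + 2" and \<nu>: "0 < \<nu>"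
  shows "(\<nu> * m) powr (\<gamma> - 1) * R powr (2 - \<gamma>) \<le> A powr (\<gamma> - 1) * S powr (\<nu>/2 + 1 - (\<nu>/2 + 1) * \<gamma> + \<gamma>/2)"
proof -
  define e where "e = \<nu>/2 + 1 - (\<nu>/2 + 1) * \<gamma> + \<gamma>/2"
  have e: "e \<ge> 0" using \<gamma> by (simp add: e_def algebra_simps)
  have p: "\<nu> * m * R powr \<nu> > 0" using m R \<nu> by simp
  have "(\<nu> * m) powr (\<gamma> - 1) * R powr (2 - \<gamma>) = (\<nu> * m * R powr \<nu>) powr (\<gamma> - 1) * (R\<^sup>2) powr e"
  proof -
    have "R powr (2 - \<gamma>) = R powr (\<nu> * (\<gamma> - 1)) * R powr (2 * e)"
      by (simp add: powr_add[symmetric] e_def algebra_simps)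
    moreover have "(R\<^sup>2) powr e = R powr (2 * e)" using power2_powr_half[of R "2 * e"] R by simp
    ultimately show ?thesis using m R \<nu> by (simp add: powr_mult powr_powr mult_ac)
  qed
  also have "\<dots> \<le> A powr (\<gamma> - 1) * S powr e"
    using A p \<gamma> S e by (intro mult_mono powr_mono2) auto
  finally show ?thesis by (simp add: e_def)
qed

lemma barrier_gradient_term_ge:
  fixes A S T \<theta> \<gamma> \<nu> :: real
  assumes A: "0 < A" and S: "0 < S" "S \<le> T" and T: "T \<le> (1 + \<theta>) * S" and \<theta>: "0 \<le> \<theta>"
    and \<gamma>: "1 < \<gamma>" and \<nu>: "0 < \<nu>"
  shows "A * S powr (-\<nu>/2 - 1) * (A powr (\<gamma> - 1) * S powr (\<nu>/2 + 1 - (\<nu>/2 + 1) * \<gamma> + \<gamma>/2)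
            * (1 + \<theta>) powr (-((\<nu>/2 + 1) * \<gamma>)))
         \<le> (A * T powr (-\<nu>/2 - 1) * sqrt S) powr \<gamma>"
proof -
  define k where "k = (\<nu>/2 + 1) * \<gamma>"
  have T0: "T > 0" using S by simp
  have "A * S powr (-\<nu>/2 - 1) * (A powr (\<gamma> - 1) * S powr (\<nu>/2 + 1 - k + \<gamma>/2) * (1 + \<theta>) powr (-k))
      = A powr \<gamma> * ((1 + \<theta>) * S) powr (-k) * S powr (\<gamma>/2)"
  proof -
    have "A * A powr (\<gamma> - 1) = A powr \<gamma>" using A by (simp add: powr_diff)
    moreover have "S powr (-\<nu>/2 - 1) * S powr (\<nu>/2 + 1 - k + \<gamma>/2) = S powr (-k) * S powr (\<gamma>/2)"
      using S by (simp add: powr_add[symmetric])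
    moreover have "((1 + \<theta>) * S) powr (-k) = (1 + \<theta>) powr (-k) * S powr (-k)"
      using \<theta> S by (simp add: powr_mult)
    ultimately show ?thesis by (simp add: mult_ac)
  qed
  also have "\<dots> \<le> A powr \<gamma> * T powr (-k) * S powr (\<gamma>/2)"
    using T0 T \<gamma> \<nu> by (intro mult_right_mono mult_left_mono powr_mono2') (auto simp: k_def)
  also have "\<dots> = (A * T powr (-\<nu>/2 - 1) * sqrt S) powr \<gamma>"
  proof -
    have "(T powr (-\<nu>/2 - 1)) powr \<gamma> = T powr (-k)"
      unfolding powr_powr k_def by (rule arg_cong[where f = "(powr) T"]) (simp add: algebra_simps)
    moreover have "(sqrt S) powr \<gamma> = S powr (\<gamma>/2)"
      using S by (simp add: powr_half_sqrt[symmetric] powr_powr)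
    ultimately show ?thesis using A T0 S by (simp add: powr_mult)
  qed
  finally show ?thesis by (simp add: k_def)
qed

text \<open>With \<open>\<theta> = \<epsilon>/R\<^sup>2\<close>: the Pucci bound of the barrier is at most \<open>A S\<^bsup>-\<nu>/2-1\<^esup> (b + \<theta> c)\<close>, while
  its gradient term is at least \<open>A S\<^bsup>-\<nu>/2-1\<^esup>\<close> times \<open>A\<^bsup>\<gamma>-1\<^esup> S\<^sup>e (1 + \<theta>)\<^bsup>-k\<^esup>\<close>.\<close>
lemma barrier_gradient_term_dominates:
  fixes A S \<epsilon> R m b c \<gamma> \<nu> :: real
  assumes A: "\<nu> * m * R powr \<nu> \<le> A" and m: "0 < m" and R: "0 < R" and S: "R\<^sup>2 \<le> S" and \<epsilon>: "0 \<le> \<epsilon>"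
    and \<gamma>: "1 < \<gamma>" "\<gamma> * (\<nu> + 1) \<le> \<nu> + 2" and \<nu>: "0 < \<nu>" and b: "0 \<le> b" and c: "0 \<le> c"
    and small: "(b + \<epsilon> / R\<^sup>2 * c) * (1 + \<epsilon> / R\<^sup>2) powr ((\<nu>/2 + 1) * \<gamma>)
                  < (\<nu> * m) powr (\<gamma> - 1) * R powr (2 - \<gamma>)"
  shows "A * (S + \<epsilon>) powr (-\<nu>/2 - 2) * (S * b + \<epsilon> * c) < (A * (S + \<epsilon>) powr (-\<nu>/2 - 1) * sqrt S) powr \<gamma>"
proof -
  define \<theta> where "\<theta> = \<epsilon> / R\<^sup>2"
  define k where "k = (\<nu>/2 + 1) * \<gamma>"
  define e where "e = \<nu>/2 + 1 - k + \<gamma>/2"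
  have \<theta>: "0 \<le> \<theta>" using \<epsilon> by (simp add: \<theta>_def)
  have "0 < \<nu> * m * R powr \<nu>" using m R \<nu> by simp
  then have A0: "0 < A" using A by linarith
  have "0 < R\<^sup>2" using R by simp
  then have S0: "0 < S" using S by linarith
  have "\<epsilon> * 1 \<le> \<epsilon> * (S / R\<^sup>2)" using S R \<epsilon> by (intro mult_left_mono) auto
  then have \<epsilon>S: "\<epsilon> \<le> \<theta> * S" by (simp add: \<theta>_def)
  have "S * b + \<epsilon> * c \<le> S * (b + \<theta> * c)" using mult_right_mono[OF \<epsilon>S c] by (simp add: algebra_simps)
  then have "A * (S + \<epsilon>) powr (-\<nu>/2 - 2) * (S * b + \<epsilon> * c) \<le> A * S powr (-\<nu>/2 - 1) * (b + \<theta> * c)"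
    using A0 S0 \<epsilon> b c \<theta> \<nu> by (intro barrier_pucci_term_le) auto
  also have "\<dots> < A * S powr (-\<nu>/2 - 1) * (A powr (\<gamma> - 1) * S powr e * (1 + \<theta>) powr (-k))"
  proof -
    have "(b + \<theta> * c) * (1 + \<theta>) powr k < A powr (\<gamma> - 1) * S powr e"
      using small barrier_scale_powr_ge[OF A m R S \<gamma> \<nu>] by (simp add: \<theta>_def k_def e_def mult_ac)
    then have "b + \<theta> * c < A powr (\<gamma> - 1) * S powr e * (1 + \<theta>) powr (-k)"
      using \<theta> by (simp add: powr_minus field_simps)
    then show ?thesis using A0 S0 by (intro mult_strict_left_mono) auto
  qed
  also have "\<dots> \<le> (A * (S + \<epsilon>) powr (-\<nu>/2 - 1) * sqrt S) powr \<gamma>"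
    using barrier_gradient_term_ge[OF A0 S0 _ _ \<theta> \<gamma>(1) \<nu>, of "S + \<epsilon>"] \<epsilon> \<epsilon>S
    by (simp add: e_def k_def algebra_simps)
  finally show ?thesis .
qed

lemma ball_min_powr_mono_of_gradient_condition:
  fixes u :: "real^'n \<Rightarrow> real" and l L :: real
  defines "\<beta> \<equiv> pucci_beta l L CARD('n)"
  assumes vs: "visc_super (\<lambda>x r p M. pucci_max l L M - norm p powr \<gamma>) u" and u0: "\<And>x. 0 \<le> u x"
    and l: "0 < l" "l \<le> L" and \<gamma>: "1 < \<gamma>" "\<gamma> * (\<nu> + 1) \<le> \<nu> + 2" and \<nu>: "0 < \<nu>" "\<nu> < \<beta> - 2"
    and R: "0 < R1" "R1 \<le> R2" and m1: "0 < ball_min u R1"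
    and gradient_condition: "l * (\<beta> - 2 - \<nu>) < (\<nu> * ball_min u R1) powr (\<gamma> - 1) * R1 powr (2 - \<gamma>)"
  shows "ball_min u R1 * R1 powr \<nu> \<le> ball_min u R2 * R2 powr \<nu>"
proof (rule barrier_bound_limit[OF \<nu>(1) R])
  fix R3 assume R3: "R2 < R3"
  define b where "b = l * (\<beta> - 2 - \<nu>)"
  define c where "c = l * \<beta>"
  have b: "0 < b" using l \<nu> by (simp add: b_def)
  have c: "0 < c" using l \<nu> by (simp add: c_def)
  define K where "K = (\<lambda>\<epsilon>. (b + \<epsilon> / R1\<^sup>2 * c) * (1 + \<epsilon> / R1\<^sup>2) powr ((\<nu>/2 + 1) * \<gamma>))"
  have "(K \<longlongrightarrow> (b + 0 / R1\<^sup>2 * c) * (1 + 0 / R1\<^sup>2) powr ((\<nu>/2 + 1) * \<gamma>)) (at_right 0)"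
    unfolding K_def using R by (intro tendsto_intros) auto
  then have "\<forall>\<^sub>F \<epsilon> in at_right 0. K \<epsilon> < (\<nu> * ball_min u R1) powr (\<gamma> - 1) * R1 powr (2 - \<gamma>)"
    using gradient_condition by (intro order_tendstoD) (simp_all add: b_def)
  moreover have "\<forall>\<^sub>F \<epsilon> in at_right 0. 0 < \<epsilon> \<and> \<epsilon> < R1\<^sup>2"
    using R by (auto simp: eventually_at_right_field intro!: exI[of _ "R1\<^sup>2"])
  ultimately show "\<forall>\<^sub>F \<epsilon> in at_right 0.
       ball_min u R1 * ((R2\<^sup>2 + \<epsilon>) powr (-\<nu>/2) - (R3\<^sup>2 + \<epsilon>) powr (-\<nu>/2))
           / ((R1\<^sup>2 + \<epsilon>) powr (-\<nu>/2) - (R3\<^sup>2 + \<epsilon>) powr (-\<nu>/2)) \<le> ball_min u R2"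
  proof eventually_elim
    case (elim \<epsilon>)
    have "R1\<^sup>2 \<le> (\<nu> + 1) * R1\<^sup>2" using \<nu> by (simp add: distrib_right)
    with elim have \<epsilon>: "0 < \<epsilon>" "\<epsilon> \<le> (\<nu> + 1) * R1\<^sup>2"
      and small: "K \<epsilon> < (\<nu> * ball_min u R1) powr (\<gamma> - 1) * R1 powr (2 - \<gamma>)" by auto
    define a where "a = ball_min u R1 / ((R1\<^sup>2 + \<epsilon>) powr (-\<nu>/2) - (R3\<^sup>2 + \<epsilon>) powr (-\<nu>/2))"
    have a: "ball_min u R1 * R1 powr \<nu> \<le> a"
      unfolding a_def using m1 R R3 \<epsilon> \<nu> by (intro barrier_scale_ge) auto
    moreover have "0 < ball_min u R1 * R1 powr \<nu>" using m1 R by simp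
    ultimately have "0 < a" by linarith
    have A: "\<nu> * ball_min u R1 * R1 powr \<nu> \<le> a * \<nu>" using mult_left_mono[OF a, of \<nu>] \<nu> by (simp add: mult_ac)
    show ?case
    proof (rule ball_min_barrier_lower_bound[OF vs u0 l \<nu>(1) \<epsilon>(1) R R3 m1 \<epsilon>(2) a_def])
      fix x :: "real^'n" assume x: "R1 < norm x" "norm x < R3"
      have S: "R1\<^sup>2 \<le> x \<bullet> x" using x R power_mono[of R1 "norm x" 2] by (simp add: power2_norm_eq_inner)
      have "a * \<nu> * l * (x \<bullet> x + \<epsilon>) powr (-\<nu>/2 - 2) * ((x \<bullet> x) * (\<beta> - 2 - \<nu>) + \<epsilon> * \<beta>)
          = a * \<nu> * (x \<bullet> x + \<epsilon>) powr (-\<nu>/2 - 2) * ((x \<bullet> x) * b + \<epsilon> * c)"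
        by (simp add: b_def c_def algebra_simps)
      also have "\<dots> < (a * \<nu> * (x \<bullet> x + \<epsilon>) powr (-\<nu>/2 - 1) * sqrt (x \<bullet> x)) powr \<gamma>"
        using small b c \<epsilon> by (intro barrier_gradient_term_dominates[OF A m1 R(1) S _ \<gamma> \<nu>(1)]) (auto simp: K_def)
      also have "\<dots> = norm ((2 * (a * (-\<nu>/2) * (x \<bullet> x + \<epsilon>) powr (-\<nu>/2 - 1))) *\<^sub>R x) powr \<gamma>"
        using \<open>0 < a\<close> \<nu> by (simp add: norm_eq_sqrt_inner[of x] abs_mult)
      finally show "a * \<nu> * l * (x \<bullet> x + \<epsilon>) powr (-\<nu>/2 - 2) *
          ((x \<bullet> x) * (pucci_beta l L CARD('n) - 2 - \<nu>) + \<epsilon> * pucci_beta l L CARD('n))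
        < norm ((2 * (a * (-\<nu>/2) * (x \<bullet> x + \<epsilon>) powr (-\<nu>/2 - 1))) *\<^sub>R x) powr \<gamma>"
        by (simp add: \<beta>_def)
    qed
  qed
qed

lemma gamma_exponent_bound:
  fixes \<beta> \<gamma> \<nu> :: real
  assumes \<beta>: "2 < \<beta>" and \<gamma>: "\<gamma> \<le> \<beta> / (\<beta> - 1)" and \<nu>: "0 \<le> \<nu>" "\<nu> \<le> \<beta> - 2"
  shows "\<gamma> * (\<nu> + 1) \<le> \<nu> + 2"
proof -
  have "\<gamma> * (\<beta> - 1) \<le> \<beta>" using \<gamma> \<beta> by (simp add: pos_le_divide_eq)
  then have "\<gamma> * (\<beta> - 1) * (\<nu> + 1) \<le> \<beta> * (\<nu> + 1)" using \<nu> by (intro mult_right_mono) auto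
  also have "\<beta> * (\<nu> + 1) \<le> (\<nu> + 2) * (\<beta> - 1)" using \<nu> by (simp add: algebra_simps)
  finally have "(\<gamma> * (\<nu> + 1)) * (\<beta> - 1) \<le> (\<nu> + 2) * (\<beta> - 1)" by (simp add: mult_ac)
  then show ?thesis using \<beta> by simp
qed

text \<open>Choosing \<open>\<nu>' < \<beta> - 2\<close> close enough to \<open>\<beta> - 2\<close> makes the gradient condition hold at \<open>R\<^sub>1 = 1\<close>.\<close>
lemma ball_min_powr_lower_bound:
  fixes u :: "real^'n \<Rightarrow> real" and l L :: real
  defines "\<beta> \<equiv> pucci_beta l L CARD('n)"
  assumes vs: "visc_super (\<lambda>x r p M. pucci_max l L M - norm p powr \<gamma>) u" and u0: "\<And>x. 0 \<le> u x"
    and l: "0 < l" "l \<le> L" and \<beta>: "2 < \<beta>" and \<gamma>: "1 < \<gamma>" "\<gamma> \<le> \<beta> / (\<beta> - 1)"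
    and m1: "0 < ball_min u 1"
  obtains \<nu>' where "0 < \<nu>'" "\<nu>' < \<beta> - 2" "\<And>R. 1 \<le> R \<Longrightarrow> ball_min u 1 \<le> ball_min u R * R powr \<nu>'"
proof -
  let ?m = "ball_min u 1"
  have "((\<lambda>\<nu>'. l * (\<beta> - 2 - \<nu>')) \<longlongrightarrow> l * (\<beta> - 2 - (\<beta> - 2))) (at_left (\<beta> - 2))"
    by (intro tendsto_intros)
  then have "\<forall>\<^sub>F \<nu>' in at_left (\<beta> - 2). l * (\<beta> - 2 - \<nu>') < ((\<beta> - 2) * ?m) powr (\<gamma> - 1) / 2"
    using \<beta> m1 by (intro order_tendstoD) auto
  moreover have "((\<lambda>\<nu>'. (\<nu>' * ?m) powr (\<gamma> - 1)) \<longlongrightarrow> ((\<beta> - 2) * ?m) powr (\<gamma> - 1)) (at_left (\<beta> - 2))"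
    using \<beta> m1 by (intro tendsto_intros) auto
  then have "\<forall>\<^sub>F \<nu>' in at_left (\<beta> - 2). ((\<beta> - 2) * ?m) powr (\<gamma> - 1) / 2 < (\<nu>' * ?m) powr (\<gamma> - 1)"
    using \<beta> m1 by (intro order_tendstoD) auto
  moreover have "\<forall>\<^sub>F \<nu>' in at_left (\<beta> - 2). 0 < \<nu>' \<and> \<nu>' < \<beta> - 2"
    using \<beta> by (auto simp: eventually_at_left_field intro!: exI[of _ 0])
  ultimately have "\<forall>\<^sub>F \<nu>' in at_left (\<beta> - 2).
      0 < \<nu>' \<and> \<nu>' < \<beta> - 2 \<and> l * (\<beta> - 2 - \<nu>') < (\<nu>' * ?m) powr (\<gamma> - 1) * 1 powr (2 - \<gamma>)"
    by eventually_elim auto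
  then obtain \<nu>' where \<nu>': "0 < \<nu>'" "\<nu>' < \<beta> - 2"
    and condition: "l * (\<beta> - 2 - \<nu>') < (\<nu>' * ?m) powr (\<gamma> - 1) * 1 powr (2 - \<gamma>)"
    using eventually_happens[of _ "at_left (\<beta> - 2)"] by (auto simp: trivial_limit_at_left_real)
  have "\<gamma> * (\<nu>' + 1) \<le> \<nu>' + 2" using gamma_exponent_bound[OF \<beta> \<gamma>(2)] \<nu>' by simp
  then have "?m \<le> ball_min u R * R powr \<nu>'" if "1 \<le> R" for R
    using ball_min_powr_mono_of_gradient_condition[OF vs u0 l \<gamma>(1) _ \<nu>'(1) _ _ that m1] \<nu>' condition
    by (simp add: \<beta>_def)
  with \<nu>' show ?thesis using that by blast
qed

lemma gradient_condition_eventually: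
  fixes f :: "real \<Rightarrow> real"
  assumes m: "0 < m" and \<nu>: "0 < \<nu>" and \<gamma>: "1 < \<gamma>" and e: "0 < 2 - \<gamma> - \<nu>' * (\<gamma> - 1)"
    and lower: "\<And>R. 1 \<le> R \<Longrightarrow> m \<le> f R * R powr \<nu>'"
  shows "\<forall>\<^sub>F R in at_top. K < (\<nu> * f R) powr (\<gamma> - 1) * R powr (2 - \<gamma>)"
proof -
  define e where "e = 2 - \<gamma> - \<nu>' * (\<gamma> - 1)"
  have "filterlim (\<lambda>R. (\<nu> * m) powr (\<gamma> - 1) * R powr e) at_top at_top"
    using \<nu> m e by (intro filterlim_tendsto_pos_mult_at_top[OF tendsto_const] filterlim_powr_at_top)
      (auto simp: e_def)
  then have "\<forall>\<^sub>F R in at_top. K < (\<nu> * m) powr (\<gamma> - 1) * R powr e \<and> 1 \<le> R"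
    by (intro eventually_conj filterlim_at_top_dense[THEN iffD1, rule_format] eventually_ge_at_top)
  then show ?thesis
  proof eventually_elim
    case (elim R)
    then have R: "1 \<le> R" by simp
    have "(\<nu> * m) powr (\<gamma> - 1) * R powr e = (\<nu> * (m * R powr (-\<nu>'))) powr (\<gamma> - 1) * R powr (2 - \<gamma>)"
      using \<nu> m R by (simp add: e_def powr_mult powr_powr powr_add[symmetric] algebra_simps)
    also have "\<dots> \<le> (\<nu> * f R) powr (\<gamma> - 1) * R powr (2 - \<gamma>)"
      using lower[OF R] \<nu> m R \<gamma> by (intro mult_right_mono powr_mono2 mult_left_mono)
        (auto simp: powr_minus divide_simps)
    finally show ?case using elim by simp
  qed
qed

lemma ball_min_powr_eventually_mono:
  fixes u :: "real^'n \<Rightarrow> real" and l L :: real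
  defines "\<beta> \<equiv> pucci_beta l L CARD('n)"
  assumes vs: "visc_super (\<lambda>x r p M. pucci_max l L M - norm p powr \<gamma>) u" and u0: "\<And>x. 0 \<le> u x"
    and l: "0 < l" "l \<le> L" and \<beta>: "2 < \<beta>" and \<gamma>: "1 < \<gamma>" "\<gamma> \<le> \<beta> / (\<beta> - 1)"
    and \<nu>: "0 < \<nu>" "\<nu> < \<beta> - 2"
  shows "\<exists>R\<^sub>\<nu>>0. mono_on {R\<^sub>\<nu>..} (\<lambda>R. ball_min u R * R powr \<nu>)"
proof (cases "ball_min u 1 = 0")
  case True
  then have "ball_min u R = 0" if "1 \<le> R" for R
    using ball_min_antimono[of u 1 R] ball_min_nonneg[of u R] u0 that by simp
  then show ?thesis by (intro exI[of _ 1] conjI mono_onI) auto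
next
  case False
  let ?m = "ball_min u 1"
  have m1: "0 < ?m" using False ball_min_nonneg[of u 1] u0 by simp
  obtain \<nu>' where \<nu>': "0 < \<nu>'" "\<nu>' < \<beta> - 2" and lower: "\<And>R. 1 \<le> R \<Longrightarrow> ?m \<le> ball_min u R * R powr \<nu>'"
    using ball_min_powr_lower_bound[OF vs u0 l \<beta>[unfolded \<beta>_def] \<gamma>(1) \<gamma>(2)[unfolded \<beta>_def] m1]
    unfolding \<beta>_def by blast
  have "\<nu>' * (\<gamma> - 1) < (\<beta> - 2) * (\<gamma> - 1)" using \<nu>' \<gamma> by (intro mult_strict_right_mono) auto
  moreover have "\<gamma> * (\<beta> - 2 + 1) \<le> \<beta> - 2 + 2" using \<beta> by (intro gamma_exponent_bound[OF \<beta> \<gamma>(2)]) auto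
  ultimately have "0 < 2 - \<gamma> - \<nu>' * (\<gamma> - 1)" by (simp add: algebra_simps)
  then have "\<forall>\<^sub>F R in at_top.
      l * (\<beta> - 2 - \<nu>) < (\<nu> * ball_min u R) powr (\<gamma> - 1) * R powr (2 - \<gamma>) \<and> 1 \<le> R"
    using m1 \<nu> \<gamma> lower by (intro eventually_conj gradient_condition_eventually eventually_ge_at_top)
  then obtain R0 where R0: "\<And>R. R0 \<le> R \<Longrightarrow>
      l * (\<beta> - 2 - \<nu>) < (\<nu> * ball_min u R) powr (\<gamma> - 1) * R powr (2 - \<gamma>) \<and> 1 \<le> R"
    by (auto simp: eventually_at_top_linorder)
  show ?thesis
  proof (intro exI[of _ "max R0 1"] conjI mono_onI)
    fix R1 R2 assume R1: "R1 \<in> {max R0 1..}" and "R2 \<in> {max R0 1..}" "R1 \<le> R2"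
    moreover have "0 < ball_min u R1"
      using lower[of R1] R1 m1 ball_min_nonneg[of u R1] u0 by (cases "ball_min u R1 = 0") auto
    ultimately show "ball_min u R1 * R1 powr \<nu> \<le> ball_min u R2 * R2 powr \<nu>"
      using gamma_exponent_bound[OF \<beta> \<gamma>(2), of \<nu>] \<nu> R0[of R1]
      by (intro ball_min_powr_mono_of_gradient_condition[OF vs u0 l \<gamma>(1)]) (auto simp: \<beta>_def)
  qed simp
qed

theorem lemma2p3:
  fixes u :: "real^'n \<Rightarrow> real" and l L :: real
  assumes "0 < l" "l \<le> L"
    and "L / l * (real CARD('n) - 1) + 1 > 2"
    and "\<And>x. u x \<ge> 0" and "lsc u"
  shows "(visc_super (\<lambda>x r p M. pucci_max l L M) u \<longrightarrow>
           mono_on {0<..} (\<lambda>R. ball_min u R * R powr (L / l * (real CARD('n) - 1) + 1 - 2)))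
       \<and> (\<forall>\<gamma>::real. 1 < \<gamma> \<and> \<gamma> \<le> (L / l * (real CARD('n) - 1) + 1) / (L / l * (real CARD('n) - 1) + 1 - 1) \<longrightarrow>
           visc_super (\<lambda>x r p M. pucci_max l L M - norm p powr \<gamma>) u \<longrightarrow>
           (ball_min u \<longlongrightarrow> 0) at_top \<longrightarrow>
           (\<forall>\<nu>. 0 < \<nu> \<and> \<nu> < L / l * (real CARD('n) - 1) + 1 - 2 \<longrightarrow>
              (\<exists>R\<^sub>\<nu>>0. mono_on {R\<^sub>\<nu>..} (\<lambda>R. ball_min u R * R powr \<nu>))))"
  using assms ball_min_powr_mono[of l L u] ball_min_powr_eventually_mono[of l L _ u]
  unfolding pucci_beta_def by blast

end
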